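(* Let $L \subset \mathbb{P}^r$ be a line, $H \subset \mathbb{P}^r$ a hyperplane transverse to $L$, and $R \subset H$ a rational normal curve (of degree $r-1$ in $H$). Let $V \subset H^0(\mathcal{I}_{L\cup R}(2))$ be a nonzero linear series of quadrics containing $L \cup R$. Assume (a) no element of $V$ is a reducible quadric containing $H$, and (b) a general element $Q_{\mathrm{gen}}$ of $V$ satisfies $L \not\subset \mathrm{Sing}\, Q_{\mathrm{gen}}$. Then for general choices of $p \in L$ and $q \in R$, letting $L_{\mathrm{gen}} := \overline{pq}$ be the line through them: (i) $L_{\mathrm{gen}}$ is not contained in $Q_{\mathrm{gen}}$; (ii) among the quadrics $Q \in V$ containing $L_{\mathrm{gen}}$, a general one does not contain $L_{\mathrm{gen}}$ in its singular locus.
   Context: Work over an algebraically closed field of characteristic $0$. $\mathcal{I}_{L\cup R}$ denotes the ideal sheaf of $L \cup R$ in $\mathbb{P}^r$; elements of $H^0(\mathcal{I}_{L\cup R}(2))$ are identified (up to scalar) with quadric hypersurfaces containing $L\cup R$. *)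

theory Defs
  imports "HOL-Analysis.Analysis" "HOL-Computational_Algebra.Polynomial"
begin

text \<open>Projective space P^r is modelled by the vector space 'k^'n with CARD('n) = r+1;
  projective points/subvarieties are represented by their affine cones.
  A quadric is a nonzero symmetric matrix A; its equation is the quadratic form qf A.\<close>

definition alg_closed_field :: "'k::field itself \<Rightarrow> bool" where
  "alg_closed_field _ \<longleftrightarrow> (\<forall>p::'k poly. degree p > 0 \<longrightarrow> (\<exists>x. poly p x = 0))"

definition linf :: "'k::comm_ring_1 ^'n \<Rightarrow> 'k^'n \<Rightarrow> 'k" where
  "linf h v = (\<Sum>i\<in>UNIV. h$i * v$i)"

definition qf :: "'k::comm_ring_1 ^'n^'n \<Rightarrow> 'k^'n \<Rightarrow> 'k" where
  "qf A v = (\<Sum>i\<in>UNIV. \<Sum>j\<in>UNIV. A$i$j * v$i * v$j)"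

definition symmetric_mat :: "'k::comm_ring_1 ^'n^'n \<Rightarrow> bool" where
  "symmetric_mat A \<longleftrightarrow> transpose A = A"

definition smult_mat :: "'k::comm_ring_1 \<Rightarrow> 'k^'n^'n \<Rightarrow> 'k^'n^'n" where
  "smult_mat c A = (\<chi> i j. c * A$i$j)"

definition zeroset :: "'k::comm_ring_1 ^'n^'n \<Rightarrow> ('k^'n) set" where
  "zeroset A = {v. qf A v = 0}"

text \<open>Singular locus (affine cone) of the quadric qf A, A symmetric: the common zeros of
  all partial derivatives, which are the entries of 2 A v (characteristic 0).\<close>
definition sing :: "'k::comm_ring_1 ^'n^'n \<Rightarrow> ('k^'n) set" where
  "sing A = {v. A *v v = 0}"

definition indep2 :: "'k::comm_ring_1 ^'n \<Rightarrow> 'k^'n \<Rightarrow> bool" where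
  "indep2 x y \<longleftrightarrow> (\<forall>a b. a *s x + b *s y = 0 \<longrightarrow> a = 0 \<and> b = 0)"

definition line_span :: "'k::comm_ring_1 ^'n \<Rightarrow> 'k^'n \<Rightarrow> ('k^'n) set" where
  "line_span x y = {a *s x + b *s y | a b. True}"

text \<open>Parametrization of a rational normal curve of degree d = r-1 in the hyperplane H,
  given a basis w 0, ..., w (d) of (the cone over) H.\<close>
definition rnc_pt :: "(nat \<Rightarrow> 'k::comm_ring_1 ^'n) \<Rightarrow> nat \<Rightarrow> 'k \<Rightarrow> 'k \<Rightarrow> 'k^'n" where
  "rnc_pt w d c e = (\<Sum>j\<le>d. (c ^ (d - j) * e ^ j) *s w j)"

definition rnc_set :: "(nat \<Rightarrow> 'k::comm_ring_1 ^'n) \<Rightarrow> nat \<Rightarrow> ('k^'n) set" where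
  "rnc_set w d = {rnc_pt w d c e | c e. True}"

inductive_set polyfun :: "('a \<Rightarrow> 'k::comm_ring_1) set \<Rightarrow> ('a \<Rightarrow> 'k) set" for C where
  const: "(\<lambda>_. c) \<in> polyfun C"
| coord: "f \<in> C \<Longrightarrow> f \<in> polyfun C"
| add: "f \<in> polyfun C \<Longrightarrow> g \<in> polyfun C \<Longrightarrow> (\<lambda>x. f x + g x) \<in> polyfun C"
| mult: "f \<in> polyfun C \<Longrightarrow> g \<in> polyfun C \<Longrightarrow> (\<lambda>x. f x * g x) \<in> polyfun C"

definition mat_coords :: "('k^'n^'n \<Rightarrow> 'k) set" where
  "mat_coords = {(\<lambda>A. A$i$j) | i j. True}"

definition quad_coords :: "('k \<times> 'k \<times> 'k \<times> 'k \<Rightarrow> 'k) set" where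
  "quad_coords = {(\<lambda>(a,b,c,d). a), (\<lambda>(a,b,c,d). b), (\<lambda>(a,b,c,d). c), (\<lambda>(a,b,c,d). d)}"

text \<open>A general (nonzero) element of a linear system W of quadrics satisfies P:
  P holds on a nonempty Zariski-open subset of W (vacuous if W has no nonzero element).\<close>
definition general_in :: "('k::comm_ring_1 ^'n^'n) set \<Rightarrow> ('k^'n^'n \<Rightarrow> bool) \<Rightarrow> bool" where
  "general_in W P \<longleftrightarrow> (\<exists>f\<in>polyfun mat_coords.
      (W \<subseteq> {0} \<or> (\<exists>A\<in>W. f A \<noteq> 0)) \<and> (\<forall>A\<in>W. A \<noteq> 0 \<longrightarrow> f A \<noteq> 0 \<longrightarrow> P A))"

definition general_param :: "('k::comm_ring_1 \<times> 'k \<times> 'k \<times> 'k \<Rightarrow> bool) \<Rightarrow> bool" where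
  "general_param P \<longleftrightarrow> (\<exists>g\<in>polyfun quad_coords. (\<exists>x. g x \<noteq> 0) \<and> (\<forall>x. g x \<noteq> 0 \<longrightarrow> P x))"

end

theory Submission
  imports Defs
begin

text \<open>Every quadric Q of V contains p \<in> L and q \<in> R, so it contains the line pq exactly when
  its polar form B_Q(p, q) vanishes. This is not identically zero on V: otherwise B_Q(L, R) = 0
  for all Q, and as Q contains L and R spans the hyperplane H transverse to L, every Q would be
  singular along L, against hypothesis (b). Fix Q0 with B_Q0(p, q) not identically zero. Where
  B_Q0(p, q) \<noteq> 0, the quadrics of V through pq are the pencils B_Q1(p, q) Q0 - B_Q0(p, q) Q1.
  Either some pencil is nonsingular at p or at q for some (p, q), which is then an open condition,
  or all pencils are singular along their lines. In the latter case a quadric of V through pq is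
  singular at every point of L (move p, keeping q) and of R (move q, keeping p), hence zero, and
  (ii) holds vacuously.\<close>

section \<open>Polar forms and lines on quadrics\<close>

lemma linf_add_left [simp]: "linf (x + y) z = linf x z + linf y z"
  by (simp add: linf_def distrib_right sum.distrib)

lemma linf_add_right [simp]: "linf z (x + y) = linf z x + linf z y"
  by (simp add: linf_def distrib_left sum.distrib)

lemma linf_smult_left [simp]: "linf (a *s x) z = a * linf x z"
  by (simp add: linf_def sum_distrib_left mult.assoc)

lemma linf_smult_right [simp]: "linf z (a *s x) = a * linf z x"
  by (simp add: linf_def sum_distrib_left mult.left_commute)

lemma linf_zero_right [simp]: "linf z 0 = 0"
  by (simp add: linf_def)

lemma linf_diff_right: "linf z (x - y) = linf z x - linf (z::'k::comm_ring_1^'n) y"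
  by (simp add: linf_def sum_subtractf right_diff_distrib)

lemma linf_sum_right: "linf z (\<Sum>j\<in>S. f j) = (\<Sum>j\<in>S. linf z (f j))"
  by (simp add: linf_def sum_distrib_left sum.swap[of _ S])

lemma linf_commute: "linf x y = linf y x"
  by (simp add: linf_def mult.commute)

lemma linf_axis_left: "linf (axis i 1) y = y $ i"
proof -
  have "linf (axis i 1) y = (\<Sum>j\<in>UNIV. if j = i then y $ j else 0)"
    unfolding linf_def by (rule sum.cong) (auto simp: axis_def)
  then show ?thesis by simp
qed

lemma matrix_vector_mult_nth_eq_linf: "(A *v v) $ i = linf (A $ i) v"
  by (simp add: matrix_vector_mult_def linf_def)

lemma matrix_vector_mult_smult_mat: "smult_mat c A *v v = c *s (A *v v)"
  by (simp add: vec_eq_iff matrix_vector_mult_def smult_mat_def sum_distrib_left mult.assoc)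

definition polar :: "'k::comm_ring_1^'n^'n \<Rightarrow> 'k^'n \<Rightarrow> 'k^'n \<Rightarrow> 'k" where
  "polar A x y = linf x (A *v y)"

lemma polar_add_left [simp]: "polar A (x + y) z = polar A x z + polar A y z"
  by (simp add: polar_def)

lemma polar_add_right [simp]: "polar A z (x + y) = polar A z x + polar A z y"
  by (simp add: polar_def matrix_vector_right_distrib)

lemma polar_smult_left [simp]: "polar A (a *s x) z = a * polar A x z"
  by (simp add: polar_def)

lemma polar_smult_right [simp]: "polar (A::'k::field^'n^'n) z (a *s x) = a * polar A z x"
  by (simp add: polar_def vector_scalar_commute)

lemma polar_transpose: "polar A x y = polar (transpose A) y x"
proof -
  have "polar A x y = (\<Sum>i\<in>UNIV. \<Sum>j\<in>UNIV. x$i * A$i$j * y$j)"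
    unfolding polar_def linf_def matrix_vector_mult_def
    by (simp add: sum_distrib_left mult_ac)
  also have "\<dots> = (\<Sum>j\<in>UNIV. \<Sum>i\<in>UNIV. x$i * A$i$j * y$j)"
    by (rule sum.swap)
  also have "\<dots> = polar (transpose A) y x"
    unfolding polar_def linf_def matrix_vector_mult_def transpose_def
    by (simp add: sum_distrib_left mult_ac)
  finally show ?thesis .
qed

lemma polar_commute: "symmetric_mat A \<Longrightarrow> polar A x y = polar A y x"
  by (metis polar_transpose symmetric_mat_def)

lemma qf_eq_polar: "qf A v = polar A v v"
  unfolding qf_def polar_def linf_def matrix_vector_mult_def
  by (simp add: sum_distrib_left mult_ac)

lemma qf_lin_comb:
  fixes A :: "'k::field^'n^'n"
  assumes "symmetric_mat A"
  shows "qf A (a *s x + b *s y) = a\<^sup>2 * qf A x + 2 * a * b * polar A x y + b\<^sup>2 * qf A y"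
  using polar_commute[OF assms, of y x]
  by (simp add: qf_eq_polar algebra_simps power2_eq_square)

lemma line_span_subset_zeroset_iff:
  fixes A :: "'k::field_char_0^'n^'n"
  assumes "symmetric_mat A" "qf A x = 0" "qf A y = 0"
  shows "line_span x y \<subseteq> zeroset A \<longleftrightarrow> polar A x y = 0"
proof
  assume "line_span x y \<subseteq> zeroset A"
  moreover have "1 *s x + 1 *s y \<in> line_span x y"
    unfolding line_span_def by blast
  ultimately have "qf A (1 *s x + 1 *s y) = 0"
    by (auto simp: zeroset_def)
  then show "polar A x y = 0"
    using qf_lin_comb[OF assms(1), of 1 x 1 y] assms by simp
qed (use qf_lin_comb[OF assms(1)] assms in \<open>auto simp: line_span_def zeroset_def\<close>)

lemma left_in_line_span: "x \<in> line_span x (y::'k::comm_ring_1^'n)"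
  unfolding line_span_def by (force intro: exI[of _ 1] exI[of _ 0])

lemma right_in_line_span: "y \<in> line_span x (y::'k::comm_ring_1^'n)"
  unfolding line_span_def by (force intro: exI[of _ 1] exI[of _ 0])

lemma polar_eq_0_if_line_span_subset_zeroset:
  fixes A :: "'k::field_char_0^'n^'n"
  assumes "symmetric_mat A" "line_span x y \<subseteq> zeroset A"
  shows "polar A x y = 0"
proof -
  have "qf A x = 0" "qf A y = 0"
    using assms(2) left_in_line_span[of x y] right_in_line_span[of y x]
    unfolding zeroset_def by blast+
  then show ?thesis
    using line_span_subset_zeroset_iff assms by blast
qed

lemma line_span_subset_line_span:
  fixes x y :: "'k::field^'n"
  assumes "v \<in> line_span x y" "v' \<in> line_span x y"
  shows "line_span v v' \<subseteq> line_span x y"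
proof
  fix z assume "z \<in> line_span v v'"
  then obtain s t where z: "z = s *s v + t *s v'"
    by (auto simp: line_span_def)
  obtain a b a' b' where "v = a *s x + b *s y" "v' = a' *s x + b' *s y"
    using assms by (auto simp: line_span_def)
  then have "z = (s * a + t * a') *s x + (s * b + t * b') *s y"
    by (simp add: z vec_eq_iff algebra_simps)
  then show "z \<in> line_span x y"
    unfolding line_span_def by blast
qed

lemma line_span_add:
  fixes x y :: "'k::field^'n"
  assumes "v \<in> line_span x y" "v' \<in> line_span x y"
  shows "v + v' \<in> line_span x y"
proof -
  have "1 *s v + 1 *s v' \<in> line_span v v'"
    unfolding line_span_def by blast
  then show ?thesis
    using line_span_subset_line_span[OF assms] by auto
qed

lemma span_insert_transversal:
  fixes h u :: "'k::field^'n"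
  assumes "vec.span B = {v. linf h v = 0}" "linf h u \<noteq> 0"
  shows "vec.span (insert u B) = UNIV"
proof -
  have "x - (linf h x / linf h u) *s u \<in> vec.span B" for x
    using assms by (simp add: linf_diff_right)
  then show ?thesis
    using vec.span_breakdown_eq by blast
qed

lemma linf_eq_0_on_span:
  assumes "v \<in> vec.span B" "\<And>b. b \<in> B \<Longrightarrow> linf y b = 0"
  shows "linf y v = (0::'k::field)"
  using assms by (induction rule: vec.span_induct_alt) auto

lemma vec_eq_0_if_linf_eq_0_on_spanning:
  fixes y :: "'k::field^'n"
  assumes "vec.span B = UNIV" "\<And>b. b \<in> B \<Longrightarrow> linf y b = 0"
  shows "y = 0"
proof -
  have "linf y (axis i 1) = 0" for i
    using linf_eq_0_on_span[of "axis i 1" B y] assms by simp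
  then show ?thesis
    by (simp add: vec_eq_iff linf_commute[of y] linf_axis_left)
qed

lemma matrix_eq_0_if_kills_spanning:
  fixes A :: "'k::field^'n^'n"
  assumes "vec.span B = UNIV" "\<And>b. b \<in> B \<Longrightarrow> A *v b = 0"
  shows "A = 0"
proof -
  have "A $ i = 0" for i
    using assms by (intro vec_eq_0_if_linf_eq_0_on_spanning[of B])
      (auto simp flip: matrix_vector_mult_nth_eq_linf)
  then show ?thesis
    by (simp add: vec_eq_iff)
qed

lemma line_span_subset_sing:
  fixes A :: "'k::field_char_0^'n^'n"
  assumes sym: "symmetric_mat A" and L: "line_span u1 u2 \<subseteq> zeroset A"
    and spanning: "vec.span (insert u0 B) = UNIV" and u0: "u0 \<in> line_span u1 u2"
    and polar_B: "\<And>v b. v \<in> line_span u1 u2 \<Longrightarrow> b \<in> B \<Longrightarrow> polar A v b = 0"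
  shows "line_span u1 u2 \<subseteq> sing A"
proof
  fix v assume v: "v \<in> line_span u1 u2"
  have "linf (A *v v) b = 0" if "b \<in> insert u0 B" for b
  proof -
    have "linf (A *v v) b = polar A b v"
      by (simp add: polar_def linf_commute)
    also have "\<dots> = 0"
    proof (cases "b = u0")
      case True
      then show ?thesis
        using L line_span_subset_line_span[OF u0 v] sym
        by (blast intro: polar_eq_0_if_line_span_subset_zeroset)
    next
      case False
      then show ?thesis
        using that polar_B[OF v] polar_commute[OF sym] by auto
    qed
    finally show ?thesis .
  qed
  then show "v \<in> sing A"
    using vec_eq_0_if_linf_eq_0_on_spanning[OF spanning] by (auto simp: sing_def)
qed

section \<open>Binary forms\<close>

definition binary_form :: "nat \<Rightarrow> (nat \<Rightarrow> 'k::comm_ring_1) \<Rightarrow> 'k \<Rightarrow> 'k \<Rightarrow> 'k" where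
  "binary_form d f c e = (\<Sum>j\<le>d. c ^ (d - j) * e ^ j * f j)"

definition binary_form_poly :: "nat \<Rightarrow> (nat \<Rightarrow> 'k::comm_ring_1) \<Rightarrow> 'k poly" where
  "binary_form_poly d f = (\<Sum>j\<le>d. monom (f j) (d - j))"

lemma poly_binary_form_poly: "poly (binary_form_poly d f) t = binary_form d f t 1"
  by (simp add: binary_form_poly_def binary_form_def poly_sum poly_monom mult.commute)

lemma coeff_binary_form_poly: "i \<le> d \<Longrightarrow> coeff (binary_form_poly d f) (d - i) = f i"
proof -
  assume i: "i \<le> d"
  have "coeff (binary_form_poly d f) (d - i) = (\<Sum>j\<le>d. if j = i then f j else 0)"
    unfolding binary_form_poly_def coeff_sum coeff_monom
    by (rule sum.cong) (use i in auto)
  also have "\<dots> = f i"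
    using i by simp
  finally show ?thesis .
qed

lemma binary_form_poly_eq_0_iff: "binary_form_poly d f = 0 \<longleftrightarrow> (\<forall>j\<le>d. f j = 0)"
proof
  show "binary_form_poly d f = 0 \<Longrightarrow> \<forall>j\<le>d. f j = 0"
    by (metis coeff_0 coeff_binary_form_poly)
qed (simp add: binary_form_poly_def)

lemma binary_form_coeff_eq_0:
  fixes f :: "nat \<Rightarrow> 'k::{idom, ring_char_0}"
  assumes "\<And>c e. binary_form d f c e = 0" "j \<le> d"
  shows "f j = 0"
proof -
  have "binary_form_poly d f = 0"
    using assms(1) by (simp flip: poly_all_0_iff_0 add: poly_binary_form_poly)
  then show ?thesis
    using assms(2) by (simp add: binary_form_poly_eq_0_iff)
qed

text \<open>The product of the two dehomogenized forms vanishes identically, and the second is nonzero.\<close>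
lemma binary_form_coeff_eq_0_off_zeros:
  fixes f g :: "nat \<Rightarrow> 'k::{idom, ring_char_0}"
  assumes g0: "binary_form d g c0 e0 \<noteq> 0"
    and vanish: "\<And>c e. binary_form d g c e \<noteq> 0 \<Longrightarrow> binary_form d f c e = 0"
    and "j \<le> d"
  shows "f j = 0"
proof -
  have "poly (binary_form_poly d f * binary_form_poly d g) t = 0" for t
    using vanish[of t 1] by (auto simp: poly_binary_form_poly)
  then have "binary_form_poly d f * binary_form_poly d g = 0"
    using poly_all_0_iff_0 by blast
  moreover have "binary_form_poly d g \<noteq> 0"
    using g0 by (auto simp: binary_form_poly_eq_0_iff binary_form_def intro!: sum.neutral)
  ultimately show ?thesis
    using \<open>j \<le> d\<close> by (auto simp: binary_form_poly_eq_0_iff)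
qed

lemma matrix_vector_mult_rnc_pt:
  "(A::'k::field^'n^'n) *v rnc_pt w d c e = rnc_pt (\<lambda>j. A *v w j) d c e"
  by (simp add: rnc_pt_def vec.linear_sum[OF matrix_vector_mul_linear_gen] vector_scalar_commute)

lemma linf_rnc_pt: "linf y (rnc_pt w d c e) = binary_form d (\<lambda>j. linf y (w j)) c e"
  by (simp add: rnc_pt_def binary_form_def linf_sum_right)

lemma polar_rnc_pt:
  "polar (A::'k::field^'n^'n) v (rnc_pt w d c e) = binary_form d (\<lambda>j. polar A v (w j)) c e"
  by (simp add: polar_def matrix_vector_mult_rnc_pt linf_rnc_pt)

lemma nth_rnc_pt: "rnc_pt w d c e $ k = binary_form d (\<lambda>j. w j $ k) c e"
  by (simp add: rnc_pt_def binary_form_def)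

section \<open>Polynomial functions and general elements\<close>

lemma polyfun_sum:
  "finite S \<Longrightarrow> (\<And>s. s \<in> S \<Longrightarrow> f s \<in> polyfun C) \<Longrightarrow> (\<lambda>x. \<Sum>s\<in>S. f s x) \<in> polyfun C"
  by (induction S rule: finite_induct) (simp_all add: polyfun.const polyfun.add)

lemma polyfun_power: "f \<in> polyfun C \<Longrightarrow> (\<lambda>x. f x ^ n) \<in> polyfun C"
  by (induction n) (simp_all add: polyfun.const polyfun.mult)

lemma polyfun_diff:
  assumes "f \<in> polyfun C" "g \<in> polyfun (C::('a \<Rightarrow> 'k::comm_ring_1) set)"
  shows "(\<lambda>x. f x - g x) \<in> polyfun C"
proof -
  have "(\<lambda>x. f x + (-1) * g x) \<in> polyfun C"
    using assms by (intro polyfun.add polyfun.mult polyfun.const)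
  then show ?thesis
    by simp
qed

lemma polyfun_linf:
  "(\<And>i. (\<lambda>x. v x $ i) \<in> polyfun C) \<Longrightarrow> (\<And>i. (\<lambda>x. v' x $ i) \<in> polyfun C) \<Longrightarrow>
    (\<lambda>x. linf (v x) (v' x)) \<in> polyfun C"
  unfolding linf_def by (intro polyfun_sum polyfun.mult) auto

lemma polyfun_matrix_vector_mult_nth:
  "(\<And>i. (\<lambda>x. v x $ i) \<in> polyfun C) \<Longrightarrow> (\<lambda>x. (A *v v x) $ k) \<in> polyfun C"
  unfolding matrix_vector_mult_nth_eq_linf by (intro polyfun_linf polyfun.const)

lemma polyfun_polar:
  "(\<And>i. (\<lambda>x. v x $ i) \<in> polyfun C) \<Longrightarrow> (\<And>i. (\<lambda>x. v' x $ i) \<in> polyfun C) \<Longrightarrow>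
    (\<lambda>x. polar A (v x) (v' x)) \<in> polyfun C"
  unfolding polar_def by (intro polyfun_linf polyfun_matrix_vector_mult_nth)

lemma polyfun_mat_entry: "(\<lambda>A. A $ i $ j) \<in> polyfun mat_coords"
  by (rule polyfun.coord) (auto simp: mat_coords_def)

lemma polyfun_mat_matrix_vector_mult_nth: "(\<lambda>A. (A *v v) $ k) \<in> polyfun mat_coords"
  unfolding matrix_vector_mult_def
  by (simp, intro polyfun_sum polyfun.mult polyfun_mat_entry polyfun.const) auto

lemma polyfun_mat_polar: "(\<lambda>A. polar A x y) \<in> polyfun mat_coords"
  unfolding polar_def linf_def
  by (intro polyfun_sum polyfun.mult polyfun_mat_matrix_vector_mult_nth polyfun.const) auto

lemma polyfun_mat_along_line:
  "f \<in> polyfun mat_coords \<Longrightarrow> \<exists>P. \<forall>t. f (smult_mat t B) = poly P t"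
proof (induction rule: polyfun.induct)
  case (const c)
  show ?case
    by (rule exI[of _ "[:c:]"]) simp
next
  case (coord f)
  then obtain i j where "f = (\<lambda>A. A $ i $ j)"
    by (auto simp: mat_coords_def)
  then show ?case
    by (intro exI[of _ "[:0, B $ i $ j:]"]) (simp add: smult_mat_def)
next
  case (add f g)
  then show ?case
    by (metis poly_add)
next
  case (mult f g)
  then show ?case
    by (metis poly_mult)
qed

lemma general_inI:
  "f \<in> polyfun mat_coords \<Longrightarrow> A \<in> W \<Longrightarrow> f A \<noteq> 0 \<Longrightarrow> (\<And>A. A \<in> W \<Longrightarrow> f A \<noteq> 0 \<Longrightarrow> P A) \<Longrightarrow>
    general_in W P"
  unfolding general_in_def by (intro bexI[of _ f]) auto

lemma general_in_trivial: "W \<subseteq> {0} \<Longrightarrow> general_in W P"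
  unfolding general_in_def by (intro bexI[of _ "\<lambda>_. 1"] polyfun.const) auto

lemma general_in_not_subset_sing:
  "A \<in> W \<Longrightarrow> z \<in> S \<Longrightarrow> (A *v z) $ k \<noteq> 0 \<Longrightarrow> general_in W (\<lambda>B. \<not> S \<subseteq> sing B)"
  by (rule general_inI[OF polyfun_mat_matrix_vector_mult_nth]) (auto simp: sing_def)

text \<open>If the witness of the Zariski-open set is the zero matrix, move along the line through a
  nonzero element: the restriction is a univariate polynomial that is nonzero at 0.\<close>
lemma general_in_ex_nonzero:
  fixes V :: "('k::field_char_0^'n^'n) set"
  assumes "general_in V P" and V_smult: "\<And>c A. A \<in> V \<Longrightarrow> smult_mat c A \<in> V"
    and A1: "A1 \<in> V" "A1 \<noteq> 0"
  shows "\<exists>A\<in>V. A \<noteq> 0 \<and> P A"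
proof -
  obtain f where f: "f \<in> polyfun mat_coords" "\<forall>A\<in>V. A \<noteq> 0 \<longrightarrow> f A \<noteq> 0 \<longrightarrow> P A"
    and ex: "V \<subseteq> {0} \<or> (\<exists>A\<in>V. f A \<noteq> 0)"
    using assms(1) unfolding general_in_def by (elim bexE conjE) (rule that)
  have "\<not> V \<subseteq> {0}"
    using A1 by blast
  then obtain A where A: "A \<in> V" "f A \<noteq> 0"
    using ex by blast
  show ?thesis
  proof (cases "A = 0")
    case False
    then show ?thesis
      using A f(2) by blast
  next
    case True
    obtain Q where Q: "\<And>t. f (smult_mat t A1) = poly Q t"
      using polyfun_mat_along_line[OF f(1)] by blast
    have "smult_mat 0 A1 = 0"
      by (simp add: smult_mat_def vec_eq_iff)
    then have "Q \<noteq> 0"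
      using A(2) True Q[of 0] by auto
    then have "finite ({t. poly Q t = 0} \<union> {0})"
      by (simp add: poly_roots_finite)
    from ex_new_if_finite[OF infinite_UNIV_char_0 this]
    obtain t where t: "poly Q t \<noteq> 0" "t \<noteq> 0"
      by auto
    have "smult_mat t A1 \<noteq> 0"
      using t(2) A1(2) by (auto simp: smult_mat_def vec_eq_iff)
    moreover have "f (smult_mat t A1) \<noteq> 0"
      using Q t(1) by simp
    ultimately show ?thesis
      using V_smult[OF A1(1)] f(2) by blast
  qed
qed

lemma general_paramI:
  "g \<in> polyfun quad_coords \<Longrightarrow> g x0 \<noteq> 0 \<Longrightarrow> (\<And>x. g x \<noteq> 0 \<Longrightarrow> P x) \<Longrightarrow> general_param P"
  unfolding general_param_def by (intro bexI[of _ g] conjI exI[of _ x0]) auto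

lemma general_param_mono: "general_param P \<Longrightarrow> (\<And>x. P x \<Longrightarrow> Q x) \<Longrightarrow> general_param Q"
  unfolding general_param_def by blast

section \<open>Quadrics through a line and a rational normal curve\<close>

lemma additive_eq_0_off_kernel:
  fixes l :: "'a::plus \<Rightarrow> 'b::monoid_add" and F :: "'a \<Rightarrow> 'c::monoid_add"
  assumes S_add: "\<And>x y. x \<in> S \<Longrightarrow> y \<in> S \<Longrightarrow> x + y \<in> S"
    and l_add: "\<And>x y. l (x + y) = l x + l y" and F_add: "\<And>x y. F (x + y) = F x + F y"
    and x: "x \<in> S" "l x \<noteq> 0"
    and F_vanish: "\<And>y. y \<in> S \<Longrightarrow> l y \<noteq> 0 \<Longrightarrow> F y = 0"
    and y: "y \<in> S"
  shows "F y = 0"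
proof (cases "l y = 0")
  case True
  then have "F (x + y) = 0"
    using F_vanish S_add x y l_add by simp
  then show ?thesis
    using F_vanish[OF x] F_add by simp
qed (use F_vanish y in blast)

locale quadrics_through_line_and_rnc =
  fixes h u1 u2 :: "'k::field_char_0^'n" and w :: "nat \<Rightarrow> 'k^'n" and d :: nat
    and V :: "('k^'n^'n) set"
  assumes transverse: "\<not> line_span u1 u2 \<subseteq> {v. linf h v = 0}"
    and span_w: "vec.span (w ` {..d}) = {v. linf h v = 0}"
    and V_add: "\<And>A B. A \<in> V \<Longrightarrow> B \<in> V \<Longrightarrow> A + B \<in> V"
    and V_smult: "\<And>c A. A \<in> V \<Longrightarrow> smult_mat c A \<in> V"
    and V_symmetric: "\<And>A. A \<in> V \<Longrightarrow> symmetric_mat A"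
    and V_contains: "\<And>A. A \<in> V \<Longrightarrow> line_span u1 u2 \<union> rnc_set w d \<subseteq> zeroset A"
    and V_nonzero: "\<exists>A\<in>V. A \<noteq> 0"
    and L_not_in_sing: "general_in V (\<lambda>A. \<not> line_span u1 u2 \<subseteq> sing A)"
begin

definition pt_L :: "'k \<times> 'k \<times> 'k \<times> 'k \<Rightarrow> 'k^'n" where
  "pt_L = (\<lambda>(a, b, c, e). a *s u1 + b *s u2)"

definition pt_R :: "'k \<times> 'k \<times> 'k \<times> 'k \<Rightarrow> 'k^'n" where
  "pt_R = (\<lambda>(a, b, c, e). rnc_pt w d c e)"

definition polar_pts :: "'k^'n^'n \<Rightarrow> 'k \<times> 'k \<times> 'k \<times> 'k \<Rightarrow> 'k" where
  "polar_pts A x = polar A (pt_L x) (pt_R x)"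

lemma obtain_transversal_point:
  obtains u0 where "u0 \<in> line_span u1 u2" "vec.span (insert u0 (w ` {..d})) = UNIV"
  using transverse span_insert_transversal[OF span_w] by blast

lemma pt_L_in_line_span: "pt_L x \<in> line_span u1 u2"
  by (auto simp: pt_L_def line_span_def split: prod.split)

lemma pt_R_in_rnc_set: "pt_R x \<in> rnc_set w d"
  by (auto simp: pt_R_def rnc_set_def split: prod.split)

lemma qf_pt_L: "A \<in> V \<Longrightarrow> qf A (pt_L x) = 0"
  using V_contains[of A] pt_L_in_line_span[of x] unfolding zeroset_def by blast

lemma qf_pt_R: "A \<in> V \<Longrightarrow> qf A (pt_R x) = 0"
  using V_contains[of A] pt_R_in_rnc_set[of x] unfolding zeroset_def by blast

lemma line_subset_zeroset_iff_polar_pts: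
  "A \<in> V \<Longrightarrow> line_span (pt_L x) (pt_R x) \<subseteq> zeroset A \<longleftrightarrow> polar_pts A x = 0"
  unfolding polar_pts_def by (intro line_span_subset_zeroset_iff V_symmetric qf_pt_L qf_pt_R)

lemma polar_pts_eq_binary_form:
  "polar_pts A (a, b, c, e) = binary_form d (\<lambda>j. polar A (a *s u1 + b *s u2) (w j)) c e"
  by (simp add: polar_pts_def pt_L_def pt_R_def polar_rnc_pt)

lemma polyfun_pt_L: "(\<lambda>x. pt_L x $ i) \<in> polyfun quad_coords"
proof -
  have "(\<lambda>x. (\<lambda>(a, b, c, e). a) x * u1 $ i + (\<lambda>(a, b, c, e). b) x * u2 $ i) \<in> polyfun quad_coords"
    by (intro polyfun.add polyfun.mult polyfun.const polyfun.coord) (auto simp: quad_coords_def)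
  then show ?thesis
    by (simp add: pt_L_def case_prod_unfold)
qed

lemma polyfun_pt_R: "(\<lambda>x. pt_R x $ i) \<in> polyfun quad_coords"
proof -
  have "(\<lambda>x. binary_form d (\<lambda>j. w j $ i) ((\<lambda>(a, b, c, e). c) x) ((\<lambda>(a, b, c, e). e) x))
      \<in> polyfun quad_coords"
    unfolding binary_form_def
    by (intro polyfun_sum polyfun.mult polyfun_power polyfun.const polyfun.coord)
      (auto simp: quad_coords_def)
  then show ?thesis
    by (simp add: pt_R_def nth_rnc_pt case_prod_unfold)
qed

lemma polyfun_polar_pts: "polar_pts A \<in> polyfun quad_coords"
  unfolding polar_pts_def by (intro polyfun_polar polyfun_pt_L polyfun_pt_R)

lemma ex_polar_pts_nonzero: "\<exists>A\<in>V. \<exists>x. polar_pts A x \<noteq> 0"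
proof (rule ccontr)
  assume "\<not> ?thesis"
  then have all_vanish: "polar_pts A x = 0" if "A \<in> V" for A x
    using that by blast
  obtain u0 where u0: "u0 \<in> line_span u1 u2" "vec.span (insert u0 (w ` {..d})) = UNIV"
    by (rule obtain_transversal_point)
  have "line_span u1 u2 \<subseteq> sing A" if A: "A \<in> V" for A
  proof (rule line_span_subset_sing[OF V_symmetric[OF A] _ u0(2,1)])
    show "line_span u1 u2 \<subseteq> zeroset A"
      using V_contains[OF A] by blast
    fix v b assume "v \<in> line_span u1 u2" "b \<in> w ` {..d}"
    then obtain a' b' j where v: "v = a' *s u1 + b' *s u2" and "b = w j" "j \<le> d"
      by (auto simp: line_span_def)
    moreover have "binary_form d (\<lambda>j. polar A v (w j)) c e = 0" for c e
      using all_vanish[OF A, of "(a', b', c, e)"] unfolding polar_pts_eq_binary_form v .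
    ultimately show "polar A v b = 0"
      using binary_form_coeff_eq_0 by blast
  qed
  moreover obtain A1 where "A1 \<in> V" "A1 \<noteq> 0"
    using V_nonzero by blast
  ultimately show False
    using general_in_ex_nonzero[OF L_not_in_sing V_smult] by blast
qed

text \<open>When polar_pts A0 x is nonzero, the pencils pencil A0 A1 x (A1 in V) are exactly the
  quadrics of V containing the line through pt_L x and pt_R x.\<close>
definition pencil :: "'k^'n^'n \<Rightarrow> 'k^'n^'n \<Rightarrow> 'k \<times> 'k \<times> 'k \<times> 'k \<Rightarrow> 'k^'n^'n" where
  "pencil A0 A1 x = smult_mat (polar_pts A1 x) A0 + smult_mat (- polar_pts A0 x) A1"

lemma pencil_in_V: "A0 \<in> V \<Longrightarrow> A1 \<in> V \<Longrightarrow> pencil A0 A1 x \<in> V"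
  unfolding pencil_def by (intro V_add V_smult)

lemma matrix_vector_mult_pencil:
  "pencil A0 A1 x *v z = polar_pts A1 x *s (A0 *v z) - polar_pts A0 x *s (A1 *v z)"
  by (simp add: pencil_def matrix_vector_mult_add_rdistrib matrix_vector_mult_smult_mat vector_smult_lneg)

lemma polar_pts_pencil: "polar_pts (pencil A0 A1 x) x = 0"
  by (simp add: polar_pts_def polar_def matrix_vector_mult_pencil linf_diff_right mult.commute)

text \<open>If all pencils through A0 are singular along their lines, then a quadric of V containing
  the line through p in L and q in R is singular at every point of L
  (moving p with q fixed) and of R (moving q with p fixed), so it vanishes.\<close>
lemma eq_0_if_pencils_singular:
  assumes x: "polar_pts A0 (a, b, c, e) \<noteq> 0" and A: "A \<in> V" "polar_pts A (a, b, c, e) = 0"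
    and singular: "\<And>x. polar_pts A0 x \<noteq> 0 \<Longrightarrow> polar_pts A x = 0 \<Longrightarrow>
      A *v pt_L x = 0 \<and> A *v pt_R x = 0"
  shows "A = 0"
proof -
  define p where "p = a *s u1 + b *s u2"
  define q where "q = rnc_pt w d c e"
  have polar_pts_eq:
    "polar_pts B (a', b', c', e') = polar B (a' *s u1 + b' *s u2) (rnc_pt w d c' e')" for B a' b' c' e'
    by (simp add: polar_pts_def pt_L_def pt_R_def)
  have Ap: "A *v p = 0" and Aq: "A *v q = 0"
    using singular[OF x A(2)] by (simp_all add: pt_L_def pt_R_def p_def q_def)
  obtain u0 where u0: "u0 \<in> line_span u1 u2" "vec.span (insert u0 (w ` {..d})) = UNIV"
    by (rule obtain_transversal_point)
  have "A *v u0 = 0"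
  proof (rule additive_eq_0_off_kernel
      [where S = "line_span u1 u2" and l = "\<lambda>v. polar A0 v q" and F = "\<lambda>v. A *v v"])
    show "p \<in> line_span u1 u2" "polar A0 p q \<noteq> 0"
      using x by (auto simp: p_def q_def line_span_def polar_pts_eq)
    fix v assume "v \<in> line_span u1 u2" "polar A0 v q \<noteq> 0"
    then obtain a' b' where "v = a' *s u1 + b' *s u2" "polar_pts A0 (a', b', c, e) \<noteq> 0"
      by (auto simp: line_span_def polar_pts_eq q_def)
    moreover have "polar_pts A (a', b', c, e) = 0"
      using Aq by (simp add: polar_pts_eq polar_def q_def)
    ultimately show "A *v v = 0"
      using singular[of "(a', b', c, e)"] by (simp add: pt_L_def)
  qed (use u0 line_span_add matrix_vector_right_distrib in auto)
  moreover have "A *v w j = 0" if "j \<le> d" for j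
  proof -
    have "(A *v w j) $ k = 0" for k
    proof (rule binary_form_coeff_eq_0_off_zeros[OF _ _ that])
      show "binary_form d (\<lambda>j. polar A0 p (w j)) c e \<noteq> 0"
        using x by (simp add: p_def polar_pts_eq_binary_form)
      fix c' e' assume "binary_form d (\<lambda>j. polar A0 p (w j)) c' e' \<noteq> 0"
      then have "polar_pts A0 (a, b, c', e') \<noteq> 0"
        by (simp add: p_def polar_pts_eq_binary_form)
      moreover have "polar_pts A (a, b, c', e') = 0"
        using Ap polar_commute[OF V_symmetric[OF A(1)]] by (simp add: polar_pts_eq polar_def p_def)
      ultimately have "A *v rnc_pt w d c' e' = 0"
        using singular[of "(a, b, c', e')"] by (simp add: pt_R_def)
      then show "binary_form d (\<lambda>j. (A *v w j) $ k) c' e' = 0"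
        by (metis matrix_vector_mult_rnc_pt nth_rnc_pt zero_index)
    qed
    then show ?thesis
      by (simp add: vec_eq_iff)
  qed
  ultimately show ?thesis
    using matrix_eq_0_if_kills_spanning[OF u0(2)] by blast
qed

lemma general_in_not_contained:
  "A \<in> V \<Longrightarrow> polar_pts A x \<noteq> 0 \<Longrightarrow> general_in V (\<lambda>B. \<not> line_span (pt_L x) (pt_R x) \<subseteq> zeroset B)"
  by (rule general_inI[OF polyfun_mat_polar, of A])
    (use line_subset_zeroset_iff_polar_pts in \<open>auto simp: polar_pts_def\<close>)

theorem general_line_through_L_and_R:
  "general_param (\<lambda>x. general_in V (\<lambda>A. \<not> line_span (pt_L x) (pt_R x) \<subseteq> zeroset A) \<and>
     general_in {A \<in> V. line_span (pt_L x) (pt_R x) \<subseteq> zeroset A}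
       (\<lambda>A. \<not> line_span (pt_L x) (pt_R x) \<subseteq> sing A))"
  (is "general_param (\<lambda>x. ?contained x \<and> general_in (?W x) (?singular x))")
proof -
  obtain A0 x0 where A0: "A0 \<in> V" "polar_pts A0 x0 \<noteq> 0"
    using ex_polar_pts_nonzero by blast
  show ?thesis
  proof (cases "\<exists>A1\<in>V. \<exists>Z\<in>{pt_L, pt_R}. \<exists>k x. (pencil A0 A1 x *v Z x) $ k \<noteq> 0")
    case True
    then obtain A1 Z k x1 where A1: "A1 \<in> V" and Z: "Z \<in> {pt_L, pt_R}"
      and x1: "(pencil A0 A1 x1 *v Z x1) $ k \<noteq> 0"
      by blast
    show ?thesis
    proof (rule general_paramI[where g = "\<lambda>x. (pencil A0 A1 x *v Z x) $ k", OF _ x1])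
      show "(\<lambda>x. (pencil A0 A1 x *v Z x) $ k) \<in> polyfun quad_coords"
        using Z unfolding matrix_vector_mult_pencil
        by (auto intro!: polyfun_diff polyfun.mult polyfun_polar_pts polyfun_matrix_vector_mult_nth
            polyfun_pt_L polyfun_pt_R)
    next
      fix x assume nz: "(pencil A0 A1 x *v Z x) $ k \<noteq> 0"
      then have "polar_pts A0 x \<noteq> 0 \<or> polar_pts A1 x \<noteq> 0"
        by (auto simp: matrix_vector_mult_pencil)
      then have "?contained x"
        using general_in_not_contained A0(1) A1 by blast
      moreover have "general_in (?W x) (?singular x)"
      proof (rule general_in_not_subset_sing[OF _ _ nz])
        show "pencil A0 A1 x \<in> ?W x"
          using pencil_in_V[OF A0(1) A1] line_subset_zeroset_iff_polar_pts polar_pts_pencil by blast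
        show "Z x \<in> line_span (pt_L x) (pt_R x)"
          using Z by (auto intro: left_in_line_span right_in_line_span)
      qed
      ultimately show "?contained x \<and> general_in (?W x) (?singular x)" ..
    qed
  next
    case False
    have singular: "A *v pt_L x = 0 \<and> A *v pt_R x = 0"
      if "A \<in> V" "polar_pts A0 x \<noteq> 0" "polar_pts A x = 0" for A x
    proof -
      have "(pencil A0 A x *v Z x) $ k = 0" if "Z \<in> {pt_L, pt_R}" for Z k
        using False \<open>A \<in> V\<close> that by blast
      then have "A *v Z x = 0" if "Z \<in> {pt_L, pt_R}" for Z
        using that \<open>polar_pts A0 x \<noteq> 0\<close> \<open>polar_pts A x = 0\<close> by (simp add: matrix_vector_mult_pencil vec_eq_iff)
      then show ?thesis
        by blast
    qed
    show ?thesis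
    proof (rule general_paramI[OF polyfun_polar_pts A0(2)])
      fix x assume x: "polar_pts A0 x \<noteq> 0"
      obtain a b c e where x_eq: "x = (a, b, c, e)"
        by (cases x) auto
      have "?W x \<subseteq> {0}"
      proof
        fix A assume "A \<in> ?W x"
        then have "A \<in> V" "polar_pts A (a, b, c, e) = 0"
          using line_subset_zeroset_iff_polar_pts by (auto simp: x_eq)
        then show "A \<in> {0}"
          using eq_0_if_pencils_singular[OF x[unfolded x_eq]] singular by blast
      qed
      then show "?contained x \<and> general_in (?W x) (?singular x)"
        using general_in_not_contained[OF A0(1) x] general_in_trivial by blast
    qed
  qed
qed

end

theorem lemma5p5:
  fixes h u1 u2 :: "'k::field_char_0 ^'n"
    and w :: "nat \<Rightarrow> 'k ^'n"
    and V :: "('k ^'n^'n) set"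
  assumes alg_closed: "alg_closed_field TYPE('k)"
    and L_line: "indep2 u1 u2"
    and H_nonzero: "h \<noteq> 0"
    and transverse: "\<not> line_span u1 u2 \<subseteq> {v. linf h v = 0}"
    and R_basis: "vec.independent (w ` {..CARD('n) - 2})" "inj_on w {..CARD('n) - 2}"
      "vec.span (w ` {..CARD('n) - 2}) = {v. linf h v = 0}"
    and V_subspace: "0 \<in> V" "\<And>A B. A \<in> V \<Longrightarrow> B \<in> V \<Longrightarrow> A + B \<in> V"
      "\<And>c A. A \<in> V \<Longrightarrow> smult_mat c A \<in> V"
    and V_symmetric: "\<And>A. A \<in> V \<Longrightarrow> symmetric_mat A"
    and V_contains: "\<And>A. A \<in> V \<Longrightarrow> line_span u1 u2 \<union> rnc_set w (CARD('n) - 2) \<subseteq> zeroset A"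
    and V_nonzero: "\<exists>A\<in>V. A \<noteq> 0"
    and hyp_a: "\<And>A. A \<in> V \<Longrightarrow> A \<noteq> 0 \<Longrightarrow> \<not> {v. linf h v = 0} \<subseteq> zeroset A"
    and hyp_b: "general_in V (\<lambda>A. \<not> line_span u1 u2 \<subseteq> sing A)"
  shows "general_param (\<lambda>(a, b, c, d).
           let p = a *s u1 + b *s u2; q = rnc_pt w (CARD('n) - 2) c d in
           (a, b) \<noteq> (0, 0) \<longrightarrow> (c, d) \<noteq> (0, 0) \<longrightarrow> indep2 p q \<longrightarrow>
             general_in V (\<lambda>A. \<not> line_span p q \<subseteq> zeroset A) \<and>
             general_in {A \<in> V. line_span p q \<subseteq> zeroset A} (\<lambda>A. \<not> line_span p q \<subseteq> sing A))"
proof -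
  interpret quadrics_through_line_and_rnc h u1 u2 w "CARD('n) - 2" V
    using transverse R_basis(3) V_subspace(2,3) V_symmetric V_contains V_nonzero hyp_b
    by unfold_locales
  show ?thesis
    by (rule general_param_mono[OF general_line_through_L_and_R])
      (auto simp: pt_L_def pt_R_def Let_def)
qed

end
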